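(* Let $X$ be a set. For every $\mathcal F\subseteq[0,1]^X$, \[\gamma_S(\alpha_S(\mathcal F))=\{\mathrm{op}\circ\langle\mathcal F\rangle\mid\mathrm{op}\colon[0,1]^{\mathcal F}\to[0,1]\text{ non-expansive w.r.t. the directed sup-metric}\},\] and $\alpha_S(\gamma_S(d))=d$ for every directed pseudo-metric $d$ on $X$.
   Context: $r\ominus s=\max\{0,r-s\}$, $r\oplus s=\min\{r+s,1\}$. A directed pseudo-metric on $X$ is $d\colon X\times X\to[0,1]$ with $d(x,x)=0$ and $d(x,z)\le d(x,y)\oplus d(y,z)$. $\alpha_S(\mathcal F)(x_1,x_2)=\bigvee_{f\in\mathcal F}(f(x_1)\ominus f(x_2))$; $\gamma_S(d)=\{f\in[0,1]^X\mid\forall x_1,x_2\colon f(x_1)\ominus f(x_2)\le d(x_1,x_2)\}$. $\langle\mathcal F\rangle\colon X\to[0,1]^{\mathcal F}$, $\langle\mathcal F\rangle(x)(f)=f(x)$. The directed sup-metric on $[0,1]^{\mathcal F}$ is $(u,v)\mapsto\sup_{f\in\mathcal F}(u(f)\ominus v(f))$, and $\mathrm{op}$ is non-expansive w.r.t. it if $\mathrm{op}(u)\ominus\mathrm{op}(v)\le\sup_{f}(u(f)\ominus v(f))$ for all $u,v$. *)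

theory Defs
  imports Main "HOL.Real"
begin

definition ominus :: "real \<Rightarrow> real \<Rightarrow> real" where
  "ominus r s = max 0 (r - s)"

definition oplus :: "real \<Rightarrow> real \<Rightarrow> real" where
  "oplus r s = min (r + s) 1"

text \<open>Supremum taken in the complete lattice [0,1]: the empty supremum is 0.\<close>
definition usup :: "real set \<Rightarrow> real" where
  "usup A = (if A = {} then 0 else Sup A)"

definition unit_fun :: "('a \<Rightarrow> real) \<Rightarrow> bool" where
  "unit_fun f \<longleftrightarrow> (\<forall>x. 0 \<le> f x \<and> f x \<le> 1)"

definition dir_pmetric :: "('a \<Rightarrow> 'a \<Rightarrow> real) \<Rightarrow> bool" where
  "dir_pmetric d \<longleftrightarrow> (\<forall>x y. 0 \<le> d x y \<and> d x y \<le> 1) \<and> (\<forall>x. d x x = 0)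
     \<and> (\<forall>x y z. d x z \<le> oplus (d x y) (d y z))"

definition alphaS :: "('a \<Rightarrow> real) set \<Rightarrow> 'a \<Rightarrow> 'a \<Rightarrow> real" where
  "alphaS F x1 x2 = usup ((\<lambda>f. ominus (f x1) (f x2)) ` F)"

definition gammaS :: "('a \<Rightarrow> 'a \<Rightarrow> real) \<Rightarrow> ('a \<Rightarrow> real) set" where
  "gammaS d = {f. unit_fun f \<and> (\<forall>x1 x2. ominus (f x1) (f x2) \<le> d x1 x2)}"

text \<open>The tupling map X -> [0,1]^F; only its values on F are relevant.\<close>
definition tuple :: "('a \<Rightarrow> real) set \<Rightarrow> 'a \<Rightarrow> ('a \<Rightarrow> real) \<Rightarrow> real" where
  "tuple F x = (\<lambda>f. f x)"

text \<open>[0,1]^F, represented by functions whose values on F lie in [0,1].\<close>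
definition cube :: "('a \<Rightarrow> real) set \<Rightarrow> (('a \<Rightarrow> real) \<Rightarrow> real) set" where
  "cube F = {u. \<forall>f\<in>F. 0 \<le> u f \<and> u f \<le> 1}"

definition dir_sup_metric :: "('a \<Rightarrow> real) set \<Rightarrow> (('a \<Rightarrow> real) \<Rightarrow> real) \<Rightarrow> (('a \<Rightarrow> real) \<Rightarrow> real) \<Rightarrow> real" where
  "dir_sup_metric F u v = usup ((\<lambda>f. ominus (u f) (v f)) ` F)"

definition nonexp_op :: "('a \<Rightarrow> real) set \<Rightarrow> ((('a \<Rightarrow> real) \<Rightarrow> real) \<Rightarrow> real) \<Rightarrow> bool" where
  "nonexp_op F op \<longleftrightarrow> (\<forall>u\<in>cube F. 0 \<le> op u \<and> op u \<le> 1) \<and>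
     (\<forall>u\<in>cube F. \<forall>v\<in>cube F. ominus (op u) (op v) \<le> dir_sup_metric F u v)"

end

theory Submission
  imports Defs
begin

text \<open>A function \<open>g\<close> in \<open>\<gamma>\<^sub>S(\<alpha>\<^sub>S(F))\<close> is non-expansive on the image of \<open>\<langle>F\<rangle>\<close>, because the
  directed sup-distance between \<open>\<langle>F\<rangle>x\<close> and \<open>\<langle>F\<rangle>y\<close> is exactly \<open>\<alpha>\<^sub>S(F)(x, y)\<close>; the McShane formula
  \<open>op(u) = max 0 (sup\<^sub>x (g x - d(\<langle>F\<rangle>x, u)))\<close> extends it to a non-expansive operation on the whole
  cube, which works for directed distances as well since only the triangle inequality is used.
  Conversely, every \<open>op \<circ> \<langle>F\<rangle>\<close> is non-expansive for \<open>\<alpha>\<^sub>S(F)\<close> for the same reason.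
  For the second identity, the distance function \<open>d(-, y)\<close> lies in \<open>\<gamma>\<^sub>S(d)\<close> and attains \<open>d(x, y)\<close>.\<close>

lemma usup_least: "(\<And>a. a \<in> A \<Longrightarrow> a \<le> c) \<Longrightarrow> 0 \<le> c \<Longrightarrow> usup A \<le> c"
  unfolding usup_def by (auto intro: cSup_least)

lemma usup_upper: "bdd_above A \<Longrightarrow> a \<in> A \<Longrightarrow> a \<le> usup A"
  unfolding usup_def by (auto intro: cSup_upper)

lemma usup_nonneg:
  assumes "\<And>a. a \<in> A \<Longrightarrow> 0 \<le> a" and "bdd_above A"
  shows "0 \<le> usup A"
proof (cases "A = {}")
  case False
  then obtain a where "a \<in> A" by blast
  then show ?thesis using assms usup_upper[OF assms(2)] by (meson order_trans)
qed (simp add: usup_def)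

lemma ominus_nonneg: "0 \<le> ominus a b"
  by (simp add: ominus_def)

lemma ominus_le_iff: "0 \<le> c \<Longrightarrow> ominus a b \<le> c \<longleftrightarrow> a - b \<le> c"
  by (simp add: ominus_def)

lemma ominus_le_one: "a \<le> 1 \<Longrightarrow> 0 \<le> b \<Longrightarrow> ominus a b \<le> 1"
  by (simp add: ominus_def)

lemma ominus_triangle: "ominus a c \<le> ominus a b + ominus b c"
  by (simp add: ominus_def)

lemma dir_pmetric_triangle: "dir_pmetric d \<Longrightarrow> d x z \<le> d x y + d y z"
  unfolding dir_pmetric_def oplus_def by (meson min.boundedE)

locale directed_pseudometric =
  fixes C :: "'a set" and D :: "'a \<Rightarrow> 'a \<Rightarrow> real"
  assumes nonneg: "u \<in> C \<Longrightarrow> v \<in> C \<Longrightarrow> 0 \<le> D u v"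
    and refl: "u \<in> C \<Longrightarrow> D u u = 0"
    and triangle: "u \<in> C \<Longrightarrow> v \<in> C \<Longrightarrow> w \<in> C \<Longrightarrow> D u w \<le> D u v + D v w"
begin

definition mcshane_ext :: "('b \<Rightarrow> 'a) \<Rightarrow> ('b \<Rightarrow> real) \<Rightarrow> 'a \<Rightarrow> real" where
  "mcshane_ext t g u = max 0 (SUP x. g x - D (t x) u)"

context
  fixes t :: "'b \<Rightarrow> 'a" and g :: "'b \<Rightarrow> real"
  assumes t_in: "\<And>x. t x \<in> C" and g_le_one: "\<And>x. g x \<le> 1"
begin

lemma mcshane_bdd_above: "u \<in> C \<Longrightarrow> bdd_above (range (\<lambda>x. g x - D (t x) u))"
  by (rule bdd_aboveI[where M = 1]) (use g_le_one nonneg[OF t_in] in \<open>auto, smt (verit)\<close>)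

lemma mcshane_ext_le_one: "u \<in> C \<Longrightarrow> mcshane_ext t g u \<le> 1"
  unfolding mcshane_ext_def
  by (auto intro!: cSUP_least) (smt (verit) g_le_one nonneg[OF t_in])

lemma mcshane_ext_nonexpansive:
  assumes "u \<in> C" "v \<in> C"
  shows "ominus (mcshane_ext t g u) (mcshane_ext t g v) \<le> D u v"
proof -
  have "(SUP x. g x - D (t x) u) \<le> (SUP x. g x - D (t x) v) + D u v"
  proof (rule cSUP_least)
    fix x
    have "g x - D (t x) v \<le> (SUP x. g x - D (t x) v)"
      by (rule cSUP_upper[OF _ mcshane_bdd_above[OF assms(2)]]) simp
    then show "g x - D (t x) u \<le> (SUP x. g x - D (t x) v) + D u v"
      using triangle[OF t_in assms, of x] by simp
  qed simp
  then show ?thesis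
    using nonneg[OF assms] by (auto simp: mcshane_ext_def ominus_def)
qed

lemma mcshane_ext_extends:
  assumes g_nonneg: "\<And>x. 0 \<le> g x" and g_lipschitz: "\<And>x y. g x - g y \<le> D (t x) (t y)"
  shows "mcshane_ext t g (t y) = g y"
proof -
  have "g y \<le> (SUP x. g x - D (t x) (t y))"
    using cSUP_upper[OF _ mcshane_bdd_above[OF t_in], of y y] refl[OF t_in] by simp
  moreover have "(SUP x. g x - D (t x) (t y)) \<le> g y"
    by (rule cSUP_least) (use g_lipschitz in \<open>auto simp: algebra_simps\<close>)
  ultimately show ?thesis
    using g_nonneg[of y] by (simp add: mcshane_ext_def)
qed

end

end

lemma dir_sup_metric_least:
  "(\<And>f. f \<in> F \<Longrightarrow> ominus (u f) (v f) \<le> c) \<Longrightarrow> 0 \<le> c \<Longrightarrow> dir_sup_metric F u v \<le> c"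
  unfolding dir_sup_metric_def by (rule usup_least) auto

lemma bdd_above_ominus_cube:
  "u \<in> cube F \<Longrightarrow> v \<in> cube F \<Longrightarrow> bdd_above ((\<lambda>f. ominus (u f) (v f)) ` F)"
  by (rule bdd_aboveI[where M = 1]) (auto simp: cube_def ominus_le_one)

lemma dir_sup_metric_upper:
  "u \<in> cube F \<Longrightarrow> v \<in> cube F \<Longrightarrow> f \<in> F \<Longrightarrow> ominus (u f) (v f) \<le> dir_sup_metric F u v"
  unfolding dir_sup_metric_def by (rule usup_upper[OF bdd_above_ominus_cube]) auto

lemma dir_sup_metric_nonneg:
  "u \<in> cube F \<Longrightarrow> v \<in> cube F \<Longrightarrow> 0 \<le> dir_sup_metric F u v"
  unfolding dir_sup_metric_def
  by (rule usup_nonneg[OF _ bdd_above_ominus_cube]) (auto simp: ominus_nonneg)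

lemma directed_pseudometric_cube: "directed_pseudometric (cube F) (dir_sup_metric F)"
proof
  fix u v w assume uvw: "u \<in> cube F" "v \<in> cube F" "w \<in> cube F"
  show "0 \<le> dir_sup_metric F u v"
    using uvw(1,2) by (rule dir_sup_metric_nonneg)
  show "dir_sup_metric F u u = 0"
    by (rule antisym[OF dir_sup_metric_least dir_sup_metric_nonneg]) (use uvw in \<open>auto simp: ominus_def\<close>)
  show "dir_sup_metric F u w \<le> dir_sup_metric F u v + dir_sup_metric F v w"
  proof (rule dir_sup_metric_least)
    fix f assume "f \<in> F"
    then show "ominus (u f) (w f) \<le> dir_sup_metric F u v + dir_sup_metric F v w"
      using ominus_triangle[of "u f" "w f" "v f"] dir_sup_metric_upper[OF uvw(1,2)]
        dir_sup_metric_upper[OF uvw(2,3)] by fastforce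
  qed (use dir_sup_metric_nonneg[OF uvw(1,2)] dir_sup_metric_nonneg[OF uvw(2,3)] in simp)
qed

lemma tuple_in_cube: "\<forall>f\<in>F. unit_fun f \<Longrightarrow> tuple F x \<in> cube F"
  by (simp add: tuple_def cube_def unit_fun_def)

lemma dir_sup_metric_tuple: "dir_sup_metric F (tuple F x) (tuple F y) = alphaS F x y"
  by (simp add: dir_sup_metric_def alphaS_def tuple_def)

lemma alphaS_nonneg: "\<forall>f\<in>F. unit_fun f \<Longrightarrow> 0 \<le> alphaS F x y"
  using dir_sup_metric_nonneg[OF tuple_in_cube tuple_in_cube] by (simp add: dir_sup_metric_tuple)

lemma nonexp_comp_tuple_in_gammaS:
  assumes "\<forall>f\<in>F. unit_fun f" and "nonexp_op F op"
  shows "op \<circ> tuple F \<in> gammaS (alphaS F)"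
  using assms tuple_in_cube[OF assms(1)]
  by (auto simp: gammaS_def unit_fun_def nonexp_op_def simp flip: dir_sup_metric_tuple)

lemma gammaS_alphaS_factors_through_tuple:
  assumes F: "\<forall>f\<in>F. unit_fun f" and g: "g \<in> gammaS (alphaS F)"
  shows "\<exists>op. nonexp_op F op \<and> g = op \<circ> tuple F"
proof -
  interpret directed_pseudometric "cube F" "dir_sup_metric F"
    by (rule directed_pseudometric_cube)
  have g01: "0 \<le> g x" "g x \<le> 1" for x
    using g by (auto simp: gammaS_def unit_fun_def)
  have g_lipschitz: "g x - g y \<le> dir_sup_metric F (tuple F x) (tuple F y)" for x y
    using g alphaS_nonneg[OF F] by (auto simp: gammaS_def dir_sup_metric_tuple ominus_le_iff)
  have tuple_in: "tuple F x \<in> cube F" for x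
    using F by (rule tuple_in_cube)
  have "nonexp_op F (mcshane_ext (tuple F) g)"
    using mcshane_ext_le_one[OF tuple_in g01(2)] mcshane_ext_nonexpansive[OF tuple_in g01(2)]
    by (auto simp: nonexp_op_def mcshane_ext_def)
  moreover have "g = mcshane_ext (tuple F) g \<circ> tuple F"
    using mcshane_ext_extends[of "tuple F" g, OF tuple_in g01(2) g01(1) g_lipschitz]
    by (simp add: fun_eq_iff)
  ultimately show ?thesis by blast
qed

lemma gammaS_alphaS_eq:
  assumes "\<forall>f\<in>F. unit_fun f"
  shows "gammaS (alphaS F) = {op \<circ> tuple F | op. nonexp_op F op}"
  using nonexp_comp_tuple_in_gammaS[OF assms] gammaS_alphaS_factors_through_tuple[OF assms]
  by blast

lemma alphaS_gammaS_le: "(\<And>x y. 0 \<le> d x y) \<Longrightarrow> alphaS (gammaS d) x y \<le> d x y"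
  unfolding alphaS_def by (rule usup_least) (auto simp: gammaS_def)

lemma dist_to_point_in_gammaS: "dir_pmetric d \<Longrightarrow> (\<lambda>z. d z y) \<in> gammaS d"
  unfolding gammaS_def unit_fun_def
  using dir_pmetric_triangle[of d _ y] by (auto simp: dir_pmetric_def ominus_le_iff algebra_simps)

lemma alphaS_gammaS_eq:
  assumes d: "dir_pmetric d"
  shows "alphaS (gammaS d) = d"
proof (intro ext antisym)
  fix x y
  have d01: "0 \<le> d x y" "d x y \<le> 1" "d y y = 0" for x y
    using d by (auto simp: dir_pmetric_def)
  show "alphaS (gammaS d) x y \<le> d x y"
    by (rule alphaS_gammaS_le) (rule d01)
  have "bdd_above ((\<lambda>f. ominus (f x) (f y)) ` gammaS d)"
    by (rule bdd_aboveI[where M = 1]) (auto simp: gammaS_def unit_fun_def ominus_le_one)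
  then have "ominus (d x y) (d y y) \<le> alphaS (gammaS d) x y"
    unfolding alphaS_def by (rule usup_upper) (use dist_to_point_in_gammaS[OF d] in force)
  then show "d x y \<le> alphaS (gammaS d) x y"
    using d01 by (simp add: ominus_def)
qed

theorem mainTheorem13:
  shows "(\<forall>F :: ('a \<Rightarrow> real) set. (\<forall>f\<in>F. unit_fun f) \<longrightarrow>
            gammaS (alphaS F) = {op \<circ> tuple F | op. nonexp_op F op})
       \<and> (\<forall>d :: 'a \<Rightarrow> 'a \<Rightarrow> real. dir_pmetric d \<longrightarrow> alphaS (gammaS d) = d)"
  using gammaS_alphaS_eq alphaS_gammaS_eq by blast

end
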